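(* Let $K\subset\mathbb{R}$ be a compact set with $\mathrm{conv}(K)=[a,b]$, and suppose there exists $\varepsilon>0$ such that $[a,a+\varepsilon]\subset K$ or $[b-\varepsilon,b]\subset K$. Then there exists an index $\ell\in\mathbb{N}$, depending only on $\varepsilon$ and $b-a$, such that \[M_o^{\ell}K=M_o^{\ell+k}K\quad\text{for every }k\in\mathbb{N}.\] Moreover, $\ell$ increases with $b-a$ and decreases as $\varepsilon$ increases.
   Context: For $K\subset\mathbb{R}$, the central Minkowski symmetrization is $M_oK=\frac{K-K}{2}=\{\frac{x-y}{2}:x,y\in K\}$, and $M_o^\ell$ denotes $M_o$ applied $\ell$ times. $\mathrm{conv}$ denotes convex hull. *)

theory Defs
  imports "HOL-Analysis.Analysis"
begin

definition Mo :: "real set \<Rightarrow> real set" where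
  "Mo K = {(x - y) / 2 | x y. x \<in> K \<and> y \<in> K}"

end

theory Submission
  imports Defs "HOL-Analysis.Polytope"
begin

(* Let c = (b - a)/2 and r = \<epsilon>/2. Every iterate of Mo K lies in [-c, c] and is symmetric.
   Mo K contains the two intervals [-r, 0] and [c - r, c]; averaging a tooth with the reflection
   of another shows that M_o^(n+1) K contains the "comb" of intervals [k c/2^n - r, k c/2^n],
   0 \<le> k \<le> 2^n. Once c/2^n \<le> r these teeth overlap and cover [0, c], so by symmetry
   M_o^(n+1) K = [-c, c], which is a fixed point of Mo. The least such n depends only on
   (b - a)/\<epsilon>, monotonically. *)

lemma Mo_uminus: "x \<in> Mo S \<Longrightarrow> -x \<in> Mo S"
proof -
  assume "x \<in> Mo S"
  then obtain u v where "x = (u - v) / 2" "u \<in> S" "v \<in> S"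
    unfolding Mo_def by blast
  then have "-x = (v - u) / 2 \<and> v \<in> S \<and> u \<in> S" by simp
  then show ?thesis unfolding Mo_def by blast
qed

lemma Mo_subset_interval:
  assumes "S \<subseteq> {a..b}"
  shows "Mo S \<subseteq> {-((b - a) / 2)..(b - a) / 2}"
proof
  fix x assume "x \<in> Mo S"
  then obtain u v where "x = (u - v) / 2" "u \<in> {a..b}" "v \<in> {a..b}"
    using assms unfolding Mo_def by blast
  then show "x \<in> {-((b - a) / 2)..(b - a) / 2}" by (auto simp: field_simps)
qed

lemma Mo_symmetric_interval:
  assumes "0 \<le> c"
  shows "Mo {-c..c} = {-c..c}"
proof
  show "Mo {-c..c} \<subseteq> {-c..c}"
    using Mo_subset_interval[of "{-c..c}" "-c" c] by simp
  show "{-c..c} \<subseteq> Mo {-c..c}"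
  proof
    fix x assume "x \<in> {-c..c}"
    then have "x = (x - (-x)) / 2 \<and> x \<in> {-c..c} \<and> -x \<in> {-c..c}" by auto
    then show "x \<in> Mo {-c..c}" unfolding Mo_def by blast
  qed
qed

lemma funpow_Mo_symmetric_interval: "0 \<le> c \<Longrightarrow> (Mo ^^ k) {-c..c} = {-c..c}"
  by (induction k) (simp_all add: Mo_symmetric_interval)

lemma interval_half_difference_subset_Mo:
  assumes "u \<in> K" "{v..w} \<subseteq> K"
  shows "{(v - u) / 2..(w - u) / 2} \<subseteq> Mo K" and "{(u - w) / 2..(u - v) / 2} \<subseteq> Mo K"
proof -
  show "{(v - u) / 2..(w - u) / 2} \<subseteq> Mo K"
  proof
    fix x assume "x \<in> {(v - u) / 2..(w - u) / 2}"
    then have "u + 2 * x \<in> K" using assms(2) by auto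
    then have "x = ((u + 2 * x) - u) / 2 \<and> u + 2 * x \<in> K \<and> u \<in> K" using assms(1) by simp
    then show "x \<in> Mo K" unfolding Mo_def by blast
  qed
  show "{(u - w) / 2..(u - v) / 2} \<subseteq> Mo K"
  proof
    fix x assume "x \<in> {(u - w) / 2..(u - v) / 2}"
    then have "u - 2 * x \<in> K" using assms(2) by auto
    then have "x = (u - (u - 2 * x)) / 2 \<and> u \<in> K \<and> u - 2 * x \<in> K" using assms(1) by simp
    then show "x \<in> Mo K" unfolding Mo_def by blast
  qed
qed

lemma endpoints_mem_of_convex_hull_eq_interval:
  fixes a b :: real
  assumes "convex hull K = {a..b}" "a \<le> b"
  shows "a \<in> K" "b \<in> K"
  using extreme_point_of_convex_hull[of _ K] extreme_point_of_segment[of _ a b]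
  by (simp_all add: assms closed_segment_eq_real_ivl)

definition dyadic_comb :: "real \<Rightarrow> real \<Rightarrow> nat \<Rightarrow> real set" where
  "dyadic_comb c r n = (\<Union>k\<le>2 ^ n. {real k * c / 2 ^ n - r..real k * c / 2 ^ n})"

lemma dyadic_comb_memI:
  "k \<le> 2 ^ n \<Longrightarrow> 0 \<le> t \<Longrightarrow> t \<le> r \<Longrightarrow> real k * c / 2 ^ n - t \<in> dyadic_comb c r n"
  unfolding dyadic_comb_def by (auto intro!: bexI[of _ k])

lemma dyadic_comb_0: "dyadic_comb c r 0 = {-r..0} \<union> {c - r..c}"
  by (auto simp: dyadic_comb_def atMost_Suc)

lemma dyadic_comb_Suc_subset_Mo:
  assumes sym: "\<And>x. x \<in> S \<Longrightarrow> -x \<in> S" and comb: "dyadic_comb c r n \<subseteq> S"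
  shows "dyadic_comb c r (Suc n) \<subseteq> Mo S"
proof
  fix x assume "x \<in> dyadic_comb c r (Suc n)"
  then obtain k where k: "k \<le> 2 ^ Suc n"
    and x_mem: "x \<in> {real k * c / 2 ^ Suc n - r..real k * c / 2 ^ Suc n}"
    unfolding dyadic_comb_def by blast
  define t where "t = real k * c / 2 ^ Suc n - x"
  have t: "0 \<le> t" "t \<le> r" and x: "x = real k * c / 2 ^ Suc n - t"
    using x_mem unfolding t_def by auto
  define k\<^sub>1 k\<^sub>2 where "k\<^sub>1 = (k + 1) div 2" and "k\<^sub>2 = k div 2"
  have k12: "k\<^sub>1 + k\<^sub>2 = k" "k\<^sub>1 \<le> 2 ^ n" "k\<^sub>2 \<le> 2 ^ n"
    using k unfolding k\<^sub>1_def k\<^sub>2_def by auto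
  have "real k\<^sub>1 * c / 2 ^ n - t \<in> S" "real k\<^sub>2 * c / 2 ^ n - t \<in> S"
    using k12 t by (auto intro: subsetD[OF comb] dyadic_comb_memI)
  moreover have "real k = real k\<^sub>1 + real k\<^sub>2"
    using k12(1) by simp
  then have "x = ((real k\<^sub>1 * c / 2 ^ n - t) - -(real k\<^sub>2 * c / 2 ^ n - t)) / 2"
    unfolding x by (simp add: field_simps)
  ultimately show "x \<in> Mo S"
    using sym unfolding Mo_def by blast
qed

lemma dyadic_comb_subset_funpow_Mo:
  assumes "dyadic_comb c r 0 \<subseteq> Mo S"
  shows "dyadic_comb c r n \<subseteq> (Mo ^^ Suc n) S"
proof (induction n)
  case 0
  then show ?case using assms by simp
next
  case (Suc n)
  then show ?case
    using dyadic_comb_Suc_subset_Mo[OF Mo_uminus] by simp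
qed

lemma interval_subset_dyadic_comb:
  assumes "0 < c" "c \<le> 2 ^ n * r"
  shows "{0..c} \<subseteq> dyadic_comb c r n"
proof
  fix x :: real assume x: "x \<in> {0..c}"
  define k where "k = nat \<lceil>2 ^ n * x / c\<rceil>"
  have "2 ^ n * x / c \<le> 2 ^ n"
    using x assms(1) by (simp add: field_simps)
  then have "k \<le> 2 ^ n"
    unfolding k_def by (simp add: nat_le_iff ceiling_le_iff)
  moreover have "real k = of_int \<lceil>2 ^ n * x / c\<rceil>"
    unfolding k_def using x assms(1) by simp
  then have "2 ^ n * x / c \<le> real k" "real k < 2 ^ n * x / c + 1"
    by linarith+
  then have "x \<le> real k * c / 2 ^ n" "real k * c / 2 ^ n < x + c / 2 ^ n"
    using assms(1) by (simp_all add: field_simps)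
  moreover have "c / 2 ^ n \<le> r"
    using assms(2) by (simp add: field_simps)
  ultimately show "x \<in> dyadic_comb c r n"
    unfolding dyadic_comb_def by force
qed

lemma funpow_Mo_subset_interval:
  assumes "S \<subseteq> {a..b}"
  shows "(Mo ^^ Suc n) S \<subseteq> {-((b - a) / 2)..(b - a) / 2}"
proof (induction n)
  case 0
  then show ?case using Mo_subset_interval[OF assms] by simp
next
  case (Suc n)
  then show ?case using Mo_subset_interval[of "(Mo ^^ Suc n) S" "-((b - a) / 2)" "(b - a) / 2"] by simp
qed

lemma funpow_Mo_eq_symmetric_interval:
  assumes K: "K \<subseteq> {a..b}" "a < b" and base: "dyadic_comb ((b - a) / 2) r 0 \<subseteq> Mo K"
    and n: "b - a \<le> 2 ^ Suc n * r"
  shows "(Mo ^^ Suc n) K = {-((b - a) / 2)..(b - a) / 2}"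
proof
  define c where "c = (b - a) / 2"
  show "(Mo ^^ Suc n) K \<subseteq> {-((b - a) / 2)..(b - a) / 2}"
    using funpow_Mo_subset_interval[OF K(1)] .
  have "{0..c} \<subseteq> dyadic_comb c r n"
    using K(2) n unfolding c_def by (intro interval_subset_dyadic_comb) simp_all
  also have "\<dots> \<subseteq> (Mo ^^ Suc n) K"
    using dyadic_comb_subset_funpow_Mo[OF base] unfolding c_def .
  finally have half: "{0..c} \<subseteq> (Mo ^^ Suc n) K" .
  have "{-c..c} \<subseteq> (Mo ^^ Suc n) K"
  proof
    fix x assume x: "x \<in> {-c..c}"
    show "x \<in> (Mo ^^ Suc n) K"
    proof (cases "0 \<le> x")
      case True
      then show ?thesis using x half by auto
    next
      case False
      then have "-x \<in> (Mo ^^ Suc n) K" using x half by auto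
      then show ?thesis using Mo_uminus[of "-x"] by simp
    qed
  qed
  then show "{-((b - a) / 2)..(b - a) / 2} \<subseteq> (Mo ^^ Suc n) K"
    unfolding c_def .
qed

lemma end_interval_length_le:
  fixes a b \<epsilon> :: real
  assumes "K \<subseteq> {a..b}" "0 < \<epsilon>" "{a..a + \<epsilon>} \<subseteq> K \<or> {b - \<epsilon>..b} \<subseteq> K"
  shows "\<epsilon> \<le> b - a"
proof -
  have "a + \<epsilon> \<in> K \<or> b - \<epsilon> \<in> K"
    using assms(3) by (rule disj_forward) (use assms(2) in auto)
  then show ?thesis
    using assms(1) by auto
qed

lemma dyadic_comb_0_subset_Mo:
  assumes "a \<in> K" "b \<in> K" and ends: "{a..a + \<epsilon>} \<subseteq> K \<or> {b - \<epsilon>..b} \<subseteq> K"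
  shows "dyadic_comb ((b - a) / 2) (\<epsilon> / 2) 0 \<subseteq> Mo K"
proof -
  have "{-(\<epsilon> / 2)..0} \<subseteq> Mo K \<and> {(b - a - \<epsilon>) / 2..(b - a) / 2} \<subseteq> Mo K"
    using ends
  proof
    assume left: "{a..a + \<epsilon>} \<subseteq> K"
    show ?thesis
      using interval_half_difference_subset_Mo(2)[OF \<open>a \<in> K\<close> left]
        interval_half_difference_subset_Mo(2)[OF \<open>b \<in> K\<close> left]
      by (simp add: algebra_simps)
  next
    assume right: "{b - \<epsilon>..b} \<subseteq> K"
    show ?thesis
      using interval_half_difference_subset_Mo(1)[OF \<open>b \<in> K\<close> right]
        interval_half_difference_subset_Mo(1)[OF \<open>a \<in> K\<close> right]
      by (simp add: algebra_simps)
  qed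
  then show ?thesis
    by (simp add: dyadic_comb_0 diff_divide_distrib)
qed

definition dyadic_level :: "real \<Rightarrow> nat" where
  "dyadic_level x = (LEAST n. x \<le> 2 ^ n)"

lemma le_two_power_dyadic_level: "x \<le> 2 ^ dyadic_level x"
  unfolding dyadic_level_def
  by (rule LeastI_ex) (use real_arch_pow[of 2 x] in \<open>auto intro: less_imp_le\<close>)

lemma dyadic_level_mono: "x \<le> y \<Longrightarrow> dyadic_level x \<le> dyadic_level y"
  unfolding dyadic_level_def
  by (rule Least_le) (use le_two_power_dyadic_level[of y, unfolded dyadic_level_def] in linarith)

lemma funpow_Mo_eventually_symmetric_interval:
  assumes hull: "convex hull K = {a..b}" and "0 < \<epsilon>"
    and ends: "{a..a + \<epsilon>} \<subseteq> K \<or> {b - \<epsilon>..b} \<subseteq> K"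
  shows "(Mo ^^ (Suc (dyadic_level ((b - a) / \<epsilon>)) + k)) K = {-((b - a) / 2)..(b - a) / 2}"
proof -
  define n where "n = dyadic_level ((b - a) / \<epsilon>)"
  have K: "K \<subseteq> {a..b}"
    using hull_subset[of K convex] hull by simp
  have "a < b"
    using end_interval_length_le[OF K \<open>0 < \<epsilon>\<close> ends] \<open>0 < \<epsilon>\<close> by simp
  then have "a \<in> K" "b \<in> K"
    using endpoints_mem_of_convex_hull_eq_interval[OF hull] by simp_all
  have "b - a \<le> 2 ^ Suc n * (\<epsilon> / 2)"
    using le_two_power_dyadic_level[of "(b - a) / \<epsilon>"] \<open>0 < \<epsilon>\<close>
    unfolding n_def by (simp add: field_simps)
  then have "(Mo ^^ Suc n) K = {-((b - a) / 2)..(b - a) / 2}"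
    using funpow_Mo_eq_symmetric_interval[OF K \<open>a < b\<close> dyadic_comb_0_subset_Mo[OF \<open>a \<in> K\<close> \<open>b \<in> K\<close> ends]]
    by blast
  moreover have "(Mo ^^ (Suc n + k)) K = (Mo ^^ k) ((Mo ^^ Suc n) K)"
    by (simp only: add.commute[of "Suc n"] funpow_add comp_def)
  ultimately show ?thesis
    using \<open>a < b\<close> funpow_Mo_symmetric_interval unfolding n_def by simp
qed

theorem lemma13:
  "\<exists>L :: real \<Rightarrow> real \<Rightarrow> nat.
     (\<forall>K a b \<epsilon>. compact K \<and> convex hull K = {a..b} \<and> \<epsilon> > 0 \<and>
        ({a..a+\<epsilon>} \<subseteq> K \<or> {b-\<epsilon>..b} \<subseteq> K) \<longrightarrow>
        (\<forall>k::nat. (Mo ^^ (L \<epsilon> (b - a))) K = (Mo ^^ (L \<epsilon> (b - a) + k)) K)) \<and>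
     (\<forall>\<epsilon> \<epsilon>' d d'. 0 < \<epsilon> \<and> \<epsilon> \<le> \<epsilon>' \<and> 0 < d' \<and> d' \<le> d \<longrightarrow>
        L \<epsilon>' d' \<le> L \<epsilon> d)"
proof (intro exI[of _ "\<lambda>\<epsilon> d. Suc (dyadic_level (d / \<epsilon>))"] conjI allI impI)
  fix K :: "real set" and a b \<epsilon> :: real and k :: nat
  assume "compact K \<and> convex hull K = {a..b} \<and> \<epsilon> > 0 \<and> ({a..a+\<epsilon>} \<subseteq> K \<or> {b-\<epsilon>..b} \<subseteq> K)"
  then show "(Mo ^^ Suc (dyadic_level ((b - a) / \<epsilon>))) K
      = (Mo ^^ (Suc (dyadic_level ((b - a) / \<epsilon>)) + k)) K"
    using funpow_Mo_eventually_symmetric_interval[of K a b \<epsilon> k]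
      funpow_Mo_eventually_symmetric_interval[of K a b \<epsilon> 0] by simp
next
  fix \<epsilon> \<epsilon>' d d' :: real
  assume "0 < \<epsilon> \<and> \<epsilon> \<le> \<epsilon>' \<and> 0 < d' \<and> d' \<le> d"
  then have "d' / \<epsilon>' \<le> d / \<epsilon>"
    by (intro frac_le) auto
  then show "Suc (dyadic_level (d' / \<epsilon>')) \<le> Suc (dyadic_level (d / \<epsilon>))"
    by (simp add: dyadic_level_mono)
qed

end
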